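(* Let $K$ be a field of characteristic zero, $L_n=K[x_1^{\pm1},\ldots,x_n^{\pm1}]$, $W_n=\mathrm{Der}_K(L_n)$ and $\sigma\in\mathrm{Aut}_{\mathrm{Lie}}(W_n)$. Then there is $A\in\mathrm{GL}_n(\mathbb{Z})$ with $\sigma(H)=AH$, and $\sigma_A\sigma$ fixes each of $H_1,\ldots,H_n$, where $\sigma_A\in\mathrm{Aut}_{K\text{-alg}}(L_n)$, $\sigma_A(x_i)=\prod_jx_j^{a_{ji}}$, acts on $W_n$ by $\delta\mapsto\sigma_A\delta\sigma_A^{-1}$.
   Context: $H_i=x_i\partial_i$, $H=(H_1,\ldots,H_n)^T$, and $\sigma(H)=AH$ means $\sigma(H_i)=\sum_ja_{ij}H_j$ for all $i$, where $A=(a_{ij})$. *)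

theory Defs
  imports "HOL-Analysis.Analysis" "HOL-Library.Poly_Mapping"
begin

text \<open>Laurent polynomial ring L_n = K[x_1^{+-1},...,x_n^{+-1}], realised as the group algebra
  of Z^n: finitely supported maps from exponent vectors (int^'n) to K.
  The number n of variables is CARD('n).\<close>
type_synonym ('k,'n) laurent = "(int^'n) \<Rightarrow>\<^sub>0 'k"

definition lconst :: "'k::comm_ring_1 \<Rightarrow> ('k,'n::finite) laurent" where
  "lconst c = Poly_Mapping.single 0 c"

definition lvar :: "'n::finite \<Rightarrow> ('k::comm_ring_1,'n) laurent" where
  "lvar i = Poly_Mapping.single (axis i 1) 1"

definition lvar_inv :: "'n::finite \<Rightarrow> ('k::comm_ring_1,'n) laurent" where
  "lvar_inv i = Poly_Mapping.single (axis i (-1)) 1"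

definition lvar_pow :: "'n::finite \<Rightarrow> int \<Rightarrow> ('k::comm_ring_1,'n) laurent" where
  "lvar_pow i k = (if k \<ge> 0 then lvar i ^ nat k else lvar_inv i ^ nat (- k))"

text \<open>partial derivative d_i, with d_i(x^a) = a_i x^(a - e_i), and H_i = x_i d_i\<close>
definition lpartial :: "'n::finite \<Rightarrow> ('k::comm_ring_1,'n) laurent \<Rightarrow> ('k,'n) laurent" where
  "lpartial i f = lvar_inv i * Poly_Mapping.mapp (\<lambda>a c. of_int (a $ i) * c) f"

definition H :: "'n::finite \<Rightarrow> ('k::comm_ring_1,'n) laurent \<Rightarrow> ('k,'n) laurent" where
  "H i f = lvar i * lpartial i f"

definition Der :: "(('k::comm_ring_1,'n::finite) laurent \<Rightarrow> ('k,'n) laurent) set" where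
  "Der = {D. (\<forall>f g. D (f + g) = D f + D g) \<and> (\<forall>c f. D (lconst c * f) = lconst c * D f)
            \<and> (\<forall>f g. D (f * g) = f * D g + g * D f)}"

definition lie_bracket :: "('a::ring \<Rightarrow> 'a) \<Rightarrow> ('a \<Rightarrow> 'a) \<Rightarrow> ('a \<Rightarrow> 'a)" where
  "lie_bracket D E = (\<lambda>f. D (E f) - E (D f))"

text \<open>K-linear Lie algebra automorphisms of W_n (sigma is only relevant on Der)\<close>
definition lie_aut ::
  "((('k::comm_ring_1,'n::finite) laurent \<Rightarrow> ('k,'n) laurent) \<Rightarrow> (('k,'n) laurent \<Rightarrow> ('k,'n) laurent)) \<Rightarrow> bool" where
  "lie_aut \<sigma> \<longleftrightarrow> bij_betw \<sigma> Der Der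
     \<and> (\<forall>D\<in>Der. \<forall>E\<in>Der. \<sigma> (\<lambda>f. D f + E f) = (\<lambda>f. \<sigma> D f + \<sigma> E f))
     \<and> (\<forall>D\<in>Der. \<forall>c. \<sigma> (\<lambda>f. lconst c * D f) = (\<lambda>f. lconst c * \<sigma> D f))
     \<and> (\<forall>D\<in>Der. \<forall>E\<in>Der. \<sigma> (lie_bracket D E) = lie_bracket (\<sigma> D) (\<sigma> E))"

definition kalg_aut :: "(('k::comm_ring_1,'n::finite) laurent \<Rightarrow> ('k,'n) laurent) \<Rightarrow> bool" where
  "kalg_aut \<phi> \<longleftrightarrow> bij \<phi> \<and> (\<forall>f g. \<phi> (f + g) = \<phi> f + \<phi> g) \<and> (\<forall>f g. \<phi> (f * g) = \<phi> f * \<phi> g)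
     \<and> \<phi> 1 = 1 \<and> (\<forall>c f. \<phi> (lconst c * f) = lconst c * \<phi> f)"

definition is_sigmaA :: "int^'n^'n \<Rightarrow> (('k::comm_ring_1,'n::finite) laurent \<Rightarrow> ('k,'n) laurent) \<Rightarrow> bool" where
  "is_sigmaA A \<phi> \<longleftrightarrow> kalg_aut \<phi> \<and> (\<forall>i. \<phi> (lvar i) = (\<Prod>j\<in>UNIV. lvar_pow j (A $ j $ i)))"

definition conj_act :: "('a \<Rightarrow> 'a) \<Rightarrow> ('a \<Rightarrow> 'a) \<Rightarrow> ('a \<Rightarrow> 'a)" where
  "conj_act \<phi> D = \<phi> \<circ> D \<circ> inv \<phi>"

end

theory Submission
  imports Defs "HOL-Computational_Algebra.Polynomial"
begin

text \<open>Write $\sigma(H_i) = \sum_j t_{ij} H_j$. Since $\mathrm{ad}\, H_i$ acts diagonalisably with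
  integer eigenvalues on $W_n$, so does $\mathrm{ad}\, \sigma(H_i)$; in particular every element is
  annihilated by a monic polynomial in it. If some $t_{ij}$ were not constant, choose an exponent
  $a \neq 0$ of maximal norm among the $t_{ij}$: then $x^a$ dominates in the direction $a$, and the
  iterated brackets of $\sigma(H_i)$ with a suitable $x^c \sum_j v_j H_j$ have leading terms at the
  pairwise distinct exponents $c + k a$ with non-zero coefficients, so no monic polynomial can
  annihilate it. Hence $\sigma(H_i) = \sum_j \kappa_{ij} H_j$ with constants $\kappa_{ij}$.
  Comparing the eigenvalues of $\mathrm{ad}\, H$ and $\mathrm{ad}\, \sigma(H)$ on the common
  eigenvectors $x^c H_m$ shows that $\kappa$ is an integer matrix $A$ mapping $\mathbb{Z}^n$ onto
  itself, hence $A \in \mathrm{GL}_n(\mathbb{Z})$, and the substitution $x^b \mapsto x^{A b}$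
  conjugates $\sum_j a_{ij} H_j$ back to $H_i$.\<close>

abbreviation lmonom :: "'a \<Rightarrow> 'b \<Rightarrow> 'a \<Rightarrow>\<^sub>0 'b::zero" where
  "lmonom \<equiv> Poly_Mapping.single"
abbreviation lcoeff :: "('a \<Rightarrow>\<^sub>0 'b::zero) \<Rightarrow> 'a \<Rightarrow> 'b" where
  "lcoeff \<equiv> Poly_Mapping.lookup"
abbreviation lsupp :: "('a \<Rightarrow>\<^sub>0 'b::zero) \<Rightarrow> 'a set" where
  "lsupp \<equiv> Poly_Mapping.keys"

lemma poly_mapping_eq_sum_single:
  assumes "finite S" "lsupp f \<subseteq> S"
  shows "(f::'a \<Rightarrow>\<^sub>0 'b::comm_monoid_add) = (\<Sum>b\<in>S. lmonom b (lcoeff f b))"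
  by (rule poly_mapping_eqI) (use assms in \<open>auto simp: lookup_sum lookup_single when_def in_keys_iff\<close>)

lemma poly_mapping_induct [case_names single add]:
  fixes f :: "'a \<Rightarrow>\<^sub>0 'b::comm_monoid_add"
  assumes single: "\<And>b c. P (lmonom b c)" and add: "\<And>f g. P f \<Longrightarrow> P g \<Longrightarrow> P (f + g)"
  shows "P f"
proof -
  have "P (\<Sum>b\<in>S. lmonom b (lcoeff f b))" if "finite S" for S
    using that
  proof (induction S rule: finite_induct)
    case empty
    then show ?case using single[of undefined 0] by simp
  next
    case (insert x F)
    then show ?case using add[OF single] by simp
  qed
  then show ?thesis
    using finite_keys poly_mapping_eq_sum_single[OF finite_keys order_refl, of f] by metis
qed

lemma sum_single: "(\<Sum>x\<in>S. lmonom k (f x)) = lmonom k (\<Sum>x\<in>S. f x)"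
  by (induction S rule: infinite_finite_induct) (auto simp: single_add)

lemma prod_single_one: "(\<Prod>x\<in>S. lmonom (f x) (1::'k::comm_ring_1)) = lmonom (\<Sum>x\<in>S. f x) 1"
  by (induction S rule: infinite_finite_induct) (auto simp: mult_single)

lemma lconst_mult_single: "lconst c * lmonom b d = lmonom b (c * d)"
  by (simp add: lconst_def mult_single)

lemma lcoeff_lconst_mult: "lcoeff (lconst c * f) b = c * lcoeff f b"
  by (simp add: lconst_def mult_map_scale_conv_mult[symmetric] map.rep_eq when_def)

lemma lconst_mult: "lconst (a * b) = lconst a * lconst b"
  by (simp add: lconst_def mult_single)

lemma lconst_sum: "lconst (\<Sum>x\<in>S. f x) = (\<Sum>x\<in>S. lconst (f x))"
  by (simp add: lconst_def sum_single)

lemma lconst_0 [simp]: "lconst 0 = 0"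
  by (simp add: lconst_def)

lemma lconst_1 [simp]: "lconst 1 = 1"
  by (simp add: lconst_def)

lemma of_int_eq_lconst: "(of_int z :: ('k::comm_ring_1,'n::finite) laurent) = lconst (of_int z)"
  by (simp add: lconst_def)

lemma axis_add_int: "axis j (x::int) + axis j y = axis j (x + y)"
  by (simp add: axis_def vec_eq_iff)

lemma axis_zero_int [simp]: "axis j (0::int) = 0"
  by (simp add: axis_def vec_eq_iff)

lemma vec_eq_sum_axis: "(b::int^'n::finite) = (\<Sum>j\<in>UNIV. axis j (b $ j))"
  by (simp add: vec_eq_iff sum_component axis_def)

lemma lvar_mult_lvar_inv: "lvar i * lvar_inv i = (1::('k::comm_ring_1,'n::finite) laurent)"
proof -
  have "axis i (1::int) + axis i (-1) = 0" by (simp add: axis_def vec_eq_iff)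
  then show ?thesis by (simp add: lvar_def lvar_inv_def mult_single)
qed

lemma lvar_inv_mult_cancel: "lvar_inv m * (lvar m * x) = (x::('k::comm_ring_1,'n::finite) laurent)"
  by (simp add: mult.assoc[symmetric] mult.commute[of "lvar_inv m"] lvar_mult_lvar_inv)

lemma lvar_pow_eq_single: "lvar_pow j k = (lmonom (axis j k) 1 :: ('k::comm_ring_1,'n::finite) laurent)"
proof -
  have "lmonom (axis j x) (1::'k) ^ n = lmonom (axis j (int n * x)) 1" for x n
    by (induction n) (simp_all add: mult_single axis_add_int algebra_simps)
  then show ?thesis by (simp add: lvar_pow_def lvar_def lvar_inv_def)
qed

lemma single_eq_prod_lvar_pow:
  "lmonom b 1 = (\<Prod>j\<in>UNIV. lvar_pow j (b $ j) :: ('k::comm_ring_1,'n::finite) laurent)"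
  by (subst vec_eq_sum_axis) (simp add: lvar_pow_eq_single prod_single_one)

lemma laurent_induct [case_names lconst lvar lvar_inv add mult]:
  fixes P :: "('k::comm_ring_1,'n::finite) laurent \<Rightarrow> bool"
  assumes lconst: "\<And>c. P (lconst c)" and lvar: "\<And>j. P (lvar j)" and lvar_inv: "\<And>j. P (lvar_inv j)"
    and add: "\<And>f g. P f \<Longrightarrow> P g \<Longrightarrow> P (f + g)" and mult: "\<And>f g. P f \<Longrightarrow> P g \<Longrightarrow> P (f * g)"
  shows "P f"
proof -
  have one: "P 1" using lconst[of 1] by simp
  have power: "P (h ^ n)" if "P h" for h n
    using that by (induction n) (simp_all add: one mult)
  have prod: "P (\<Prod>j\<in>S. F j)" if "\<And>j. P (F j)" for S and F :: "'n \<Rightarrow> ('k,'n) laurent"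
    by (induction S rule: infinite_finite_induct) (simp_all add: one mult that)
  have "P (lmonom b 1)" for b
    unfolding single_eq_prod_lvar_pow by (rule prod) (simp add: lvar_pow_def power lvar lvar_inv)
  then have "P (lmonom b c)" for b c
    using mult[OF lconst, of "lmonom b 1" c] by (simp add: lconst_mult_single)
  then show ?thesis by (induction f rule: poly_mapping_induct) (simp_all add: add)
qed

lemma single_one_ne_zero: "lmonom b (1::'k::zero_neq_one) \<noteq> 0"
  by (metis lookup_single_eq lookup_zero one_neq_zero)

lemma H_eq_mapp:
  "H i f = Poly_Mapping.mapp (\<lambda>a c. of_int (a $ i) * c) (f::('k::comm_ring_1,'n::finite) laurent)"
  unfolding H_def lpartial_def mult.assoc[symmetric] lvar_mult_lvar_inv by simp

lemma lcoeff_H: "lcoeff (H i f) b = of_int (b $ i) * lcoeff f b"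
  by (simp add: H_eq_mapp lookup_mapp when_def in_keys_iff)

lemma lsupp_H: "lsupp (H j f) \<subseteq> lsupp f"
  unfolding H_eq_mapp by (rule keys_mapp_subset)

lemma H_single: "H i (lmonom b c) = lmonom b (of_int (b $ i) * c)"
  by (rule poly_mapping_eqI) (simp add: lcoeff_H lookup_single when_def)

lemma H_add: "H i (f + g) = H i f + H i g"
  by (rule poly_mapping_eqI) (simp add: lcoeff_H lookup_add algebra_simps)

lemma H_mult: "H i (f * g) = f * H i g + g * H i (f::('k::comm_ring_1,'n::finite) laurent)"
proof (induction f rule: poly_mapping_induct)
  case (single b c)
  show ?case
  proof (induction g rule: poly_mapping_induct)
    case (single b' c')
    have "of_int ((b + b') $ i) * (c * c') = c * (of_int (b' $ i) * c') + c' * (of_int (b $ i) * c)"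
      by (simp add: algebra_simps)
    then show ?case by (simp add: mult_single H_single single_add[symmetric] add.commute[of b' b])
  qed (simp add: H_add distrib_left distrib_right)
qed (simp add: H_add distrib_left distrib_right)

lemma H_lvar: "H j (lvar m) = (if j = m then lvar m else 0)"
  by (simp add: lvar_def H_single axis_def)

section \<open>Derivations as vector fields\<close>

type_synonym ('k,'n) laurent_op = "('k,'n) laurent \<Rightarrow> ('k,'n) laurent"

definition vector_field :: "('n::finite \<Rightarrow> ('k::comm_ring_1,'n) laurent) \<Rightarrow> ('k,'n) laurent_op" where
  "vector_field g f = (\<Sum>j\<in>UNIV. g j * H j f)"

lemma DerI:
  assumes "\<And>f g. D (f + g) = D f + D g" "\<And>c f. D (lconst c * f) = lconst c * D f"
    "\<And>f g. D (f * g) = f * D g + g * D f"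
  shows "D \<in> Der"
  using assms by (auto simp: Der_def)

context
  fixes D :: "('k::comm_ring_1,'n::finite) laurent_op"
  assumes D: "D \<in> Der"
begin

lemma Der_add: "D (f + g) = D f + D g"
  using D by (auto simp: Der_def)

lemma Der_lconst_mult: "D (lconst c * f) = lconst c * D f"
  using D by (auto simp: Der_def)

lemma Der_mult: "D (f * g) = f * D g + g * D f"
  using D by (auto simp: Der_def)

lemma Der_zero: "D 0 = 0"
  using Der_add[of 0 0] by simp

lemma Der_one: "D 1 = 0"
  using Der_mult[of 1 1] by simp

lemma Der_lconst: "D (lconst c) = 0"
  using Der_lconst_mult[of c 1] by (simp add: Der_one)

lemma Der_sum: "D (\<Sum>x\<in>S. F x) = (\<Sum>x\<in>S. D (F x))"
  by (induction S rule: infinite_finite_induct) (auto simp: Der_zero Der_add)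

lemma Der_lvar_inv: "D (lvar_inv j) = - (lvar_inv j * lvar_inv j * D (lvar j))"
proof -
  have "lvar j * D (lvar_inv j) + lvar_inv j * D (lvar j) = 0"
    using Der_mult[of "lvar j" "lvar_inv j"] by (simp add: lvar_mult_lvar_inv Der_one)
  then have "lvar_inv j * (lvar j * D (lvar_inv j) + lvar_inv j * D (lvar j)) = 0"
    by simp
  then have "D (lvar_inv j) + lvar_inv j * lvar_inv j * D (lvar j) = 0"
    by (simp only: distrib_left lvar_inv_mult_cancel mult.assoc)
  then show ?thesis by (simp add: eq_neg_iff_add_eq_0)
qed

end

lemma Der_eqI:
  fixes D E :: "('k::comm_ring_1,'n::finite) laurent_op"
  assumes D: "D \<in> Der" and E: "E \<in> Der" and lvar: "\<And>m. D (lvar m) = E (lvar m)"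
  shows "D = E"
proof
  fix f show "D f = E f"
  proof (induction f rule: laurent_induct)
    case (lconst c)
    show ?case by (simp add: Der_lconst[OF D] Der_lconst[OF E])
  next
    case (lvar_inv j)
    show ?case by (simp add: Der_lvar_inv[OF D] Der_lvar_inv[OF E] lvar)
  qed (simp_all add: lvar Der_add[OF D] Der_add[OF E] Der_mult[OF D] Der_mult[OF E])
qed

lemma vector_field_lvar: "vector_field g (lvar m) = g m * lvar m"
  by (simp add: vector_field_def H_lvar if_distrib cong: if_cong)

lemma vector_field_in_Der: "vector_field g \<in> Der"
proof (rule DerI)
  show "vector_field g (f1 + f2) = vector_field g f1 + vector_field g f2" for f1 f2
    by (simp add: vector_field_def H_add distrib_left sum.distrib)
  show "vector_field g (lconst c * f) = lconst c * vector_field g f" for c f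
    by (simp add: vector_field_def H_mult H_single lconst_def sum_distrib_left mult_ac)
  show "vector_field g (f1 * f2) = f1 * vector_field g f2 + f2 * vector_field g f1" for f1 f2
    by (simp add: vector_field_def H_mult sum_distrib_left distrib_left sum.distrib mult_ac)
qed

lemma Der_eq_vector_field:
  assumes D: "D \<in> Der"
  shows "D = vector_field (\<lambda>m. lvar_inv m * D (lvar m))"
  by (rule Der_eqI[OF D vector_field_in_Der])
     (simp add: vector_field_lvar mult.commute[of _ "lvar _"] mult.assoc[symmetric] lvar_mult_lvar_inv)

lemma vector_field_inj:
  assumes "vector_field g = vector_field k" shows "g = k"
proof
  fix m
  have "g m * lvar m = k m * lvar m" using assms vector_field_lvar by metis
  then have "lvar_inv m * (lvar m * g m) = lvar_inv m * (lvar m * k m)" by (simp add: mult_ac)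
  then show "g m = k m" by (simp add: lvar_inv_mult_cancel)
qed

lemma vector_field_ne_zero:
  assumes "g m \<noteq> 0" shows "vector_field g \<noteq> (\<lambda>f. 0)"
proof
  assume "vector_field g = (\<lambda>f. 0)"
  then have "vector_field g = vector_field (\<lambda>m. 0)" by (simp add: vector_field_def fun_eq_iff)
  then show False using assms vector_field_inj by metis
qed

lemma vector_field_add: "vector_field (\<lambda>m. g m + k m) = (\<lambda>f. vector_field g f + vector_field k f)"
  by (simp add: vector_field_def distrib_right sum.distrib fun_eq_iff)

lemma vector_field_scale: "vector_field (\<lambda>m. lconst c * g m) = (\<lambda>f. lconst c * vector_field g f)"
  by (simp add: vector_field_def sum_distrib_left mult_ac fun_eq_iff)

lemma vector_field_sum: "vector_field (\<lambda>m. \<Sum>b\<in>B. F b m) f = (\<Sum>b\<in>B. vector_field (F b) f)"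
  by (simp add: vector_field_def sum_distrib_right) (rule sum.swap)

lemma vector_field_zero: "vector_field (\<lambda>m. 0) = (\<lambda>f. 0)"
  by (simp add: vector_field_def fun_eq_iff)

lemma lie_bracket_in_Der:
  fixes D E :: "('k::comm_ring_1,'n::finite) laurent_op"
  assumes D: "D \<in> Der" and E: "E \<in> Der"
  shows "lie_bracket D E \<in> Der"
proof (rule DerI)
  show "lie_bracket D E (f + g) = lie_bracket D E f + lie_bracket D E g" for f g
    by (simp add: lie_bracket_def Der_add[OF D] Der_add[OF E])
  show "lie_bracket D E (lconst c * f) = lconst c * lie_bracket D E f" for c f
    by (simp add: lie_bracket_def Der_lconst_mult[OF D] Der_lconst_mult[OF E] right_diff_distrib)
  show "lie_bracket D E (f * g) = f * lie_bracket D E g + g * lie_bracket D E f" for f g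
    by (simp add: lie_bracket_def Der_add[OF D] Der_add[OF E] Der_mult[OF D] Der_mult[OF E]
        algebra_simps)
qed

lemma lie_bracket_vector_field:
  "lie_bracket (vector_field g) (vector_field k) = vector_field (\<lambda>m. vector_field g (k m) - vector_field k (g m))"
  by (rule Der_eqI[OF lie_bracket_in_Der[OF vector_field_in_Der vector_field_in_Der] vector_field_in_Der])
     (simp add: lie_bracket_def vector_field_lvar Der_mult[OF vector_field_in_Der] algebra_simps)

lemma Der_add_fun:
  assumes "D \<in> Der" "E \<in> Der" shows "(\<lambda>f. D f + E f) \<in> Der"
proof -
  obtain g k where "D = vector_field g" "E = vector_field k"
    using Der_eq_vector_field assms by blast
  then have "(\<lambda>f. D f + E f) = vector_field (\<lambda>m. g m + k m)"
    by (simp add: vector_field_add)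
  then show ?thesis by (simp add: vector_field_in_Der)
qed

lemma Der_scale_fun:
  assumes "D \<in> Der" shows "(\<lambda>f. lconst c * D f) \<in> Der"
proof -
  obtain g where "D = vector_field g"
    using Der_eq_vector_field assms by blast
  then have "(\<lambda>f. lconst c * D f) = vector_field (\<lambda>m. lconst c * g m)"
    by (simp add: vector_field_scale)
  then show ?thesis by (simp add: vector_field_in_Der)
qed

lemma Der_zero_fun: "(\<lambda>f. 0) \<in> Der"
  using vector_field_in_Der[of "\<lambda>m. 0"] by (simp add: vector_field_zero)

lemma Der_sum_fun:
  assumes "\<And>b. b \<in> B \<Longrightarrow> Y b \<in> Der" shows "(\<lambda>f. \<Sum>b\<in>B. Y b f) \<in> Der"
  using assms by (induction B rule: infinite_finite_induct) (simp_all add: Der_zero_fun Der_add_fun)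

definition pairing :: "('n::finite \<Rightarrow> 'k::comm_ring_1) \<Rightarrow> int^'n \<Rightarrow> 'k" where
  "pairing \<kappa> c = (\<Sum>j\<in>UNIV. \<kappa> j * of_int (c $ j))"

lemma pairing_add: "pairing \<kappa> (b + c) = pairing \<kappa> b + pairing \<kappa> c"
  by (simp add: pairing_def algebra_simps sum.distrib)

lemma pairing_axis: "pairing \<kappa> (axis m 1) = \<kappa> m"
  by (simp add: pairing_def axis_def if_distrib cong: if_cong)

lemma pairing_delta: "pairing (\<lambda>j. if j = i then 1 else 0) c = of_int (c $ i)"
proof -
  have "pairing (\<lambda>j. if j = i then 1 else 0) c = (\<Sum>j\<in>UNIV. if j = i then of_int (c $ j) else 0)"
    unfolding pairing_def by (rule sum.cong) auto
  then show ?thesis by simp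
qed

lemma H_eq_const_field: "H i = vector_field (\<lambda>j. lconst (if j = i then 1 else 0))"
proof
  fix f
  have "vector_field (\<lambda>j. lconst (if j = i then 1 else 0)) f = (\<Sum>j\<in>UNIV. if j = i then H j f else 0)"
    unfolding vector_field_def by (rule sum.cong) auto
  then show "H i f = vector_field (\<lambda>j. lconst (if j = i then 1 else 0)) f" by simp
qed

lemma H_in_Der: "H i \<in> Der"
  unfolding H_eq_const_field by (rule vector_field_in_Der)

lemma lcoeff_const_field:
  "lcoeff (vector_field (\<lambda>j. lconst (\<kappa> j)) f) c = pairing \<kappa> c * lcoeff f c"
  unfolding vector_field_def lookup_sum lcoeff_lconst_mult lcoeff_H pairing_def sum_distrib_right
  by (simp add: mult_ac)

lemma const_field_single:
  "vector_field (\<lambda>j. lconst (\<kappa> j)) (lmonom c w) = lconst (pairing \<kappa> c) * lmonom c w"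
  by (rule poly_mapping_eqI) (simp add: lcoeff_const_field lcoeff_lconst_mult lookup_single when_def)

lemma lie_bracket_const_field:
  "lie_bracket (vector_field (\<lambda>j. lconst (\<kappa> j))) (vector_field y) =
     vector_field (\<lambda>m. vector_field (\<lambda>j. lconst (\<kappa> j)) (y m))"
  by (simp add: lie_bracket_vector_field Der_lconst[OF vector_field_in_Der])

lemma lie_bracket_const_field_single:
  "lie_bracket (vector_field (\<lambda>j. lconst (\<kappa> j))) (vector_field (\<lambda>m. lmonom b (x m))) =
     (\<lambda>f. lconst (pairing \<kappa> b) * vector_field (\<lambda>m. lmonom b (x m)) f)"
  by (simp add: lie_bracket_const_field const_field_single vector_field_scale[symmetric])

lemma lie_bracket_H_single:
  "lie_bracket (H i) (vector_field (\<lambda>m. lmonom b (x m))) =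
     (\<lambda>f. lconst (of_int (b $ i)) * vector_field (\<lambda>m. lmonom b (x m)) f)"
  by (simp add: H_eq_const_field lie_bracket_const_field_single pairing_delta)

text \<open>The eigenvalues are read off any exponent in the support of the common eigenvector.\<close>

lemma common_eigenvalues_pairing:
  fixes \<kappa> :: "'i \<Rightarrow> 'n::finite \<Rightarrow> 'k::field"
  assumes ne: "vector_field x \<noteq> (\<lambda>f. 0)"
    and eigen: "\<And>i. lie_bracket (vector_field (\<lambda>j. lconst (\<kappa> i j))) (vector_field x) =
                       (\<lambda>f. lconst (\<mu> i) * vector_field x f)"
  shows "\<exists>c. \<forall>i. \<mu> i = pairing (\<kappa> i) c"
proof -
  have "x \<noteq> (\<lambda>m. 0)"
    using ne vector_field_zero by auto
  then obtain m where "x m \<noteq> 0"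
    by auto
  then obtain c where c: "lcoeff (x m) c \<noteq> 0"
    by (metis poly_mapping_eqI lookup_zero)
  have "pairing (\<kappa> i) c * lcoeff (x m) c = \<mu> i * lcoeff (x m) c" for i
  proof -
    have "vector_field (\<lambda>m'. vector_field (\<lambda>j. lconst (\<kappa> i j)) (x m')) =
        vector_field (\<lambda>m'. lconst (\<mu> i) * x m')"
      using eigen[of i] by (simp add: lie_bracket_const_field vector_field_scale)
    then have "vector_field (\<lambda>j. lconst (\<kappa> i j)) (x m) = lconst (\<mu> i) * x m"
      using vector_field_inj by (metis (no_types, lifting))
    then show ?thesis
      by (metis lcoeff_const_field lcoeff_lconst_mult)
  qed
  then have "\<forall>i. \<mu> i = pairing (\<kappa> i) c" using c by simp
  then show ?thesis ..
qed

context
  fixes \<sigma> :: "('k::comm_ring_1,'n::finite) laurent_op \<Rightarrow> ('k,'n) laurent_op"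
  assumes \<sigma>: "lie_aut \<sigma>"
begin

lemma lie_aut_Der: "D \<in> Der \<Longrightarrow> \<sigma> D \<in> Der"
  using \<sigma> by (auto simp: lie_aut_def bij_betw_def)

lemma lie_aut_inj: "D \<in> Der \<Longrightarrow> E \<in> Der \<Longrightarrow> \<sigma> D = \<sigma> E \<Longrightarrow> D = E"
  using \<sigma> by (auto simp: lie_aut_def bij_betw_def inj_on_def)

lemma lie_aut_surj:
  assumes "E \<in> Der" shows "\<exists>D\<in>Der. \<sigma> D = E"
proof -
  have "\<sigma> ` Der = Der" using \<sigma> by (simp add: lie_aut_def bij_betw_def)
  then show ?thesis using assms by (metis imageE)
qed

lemma lie_aut_add: "D \<in> Der \<Longrightarrow> E \<in> Der \<Longrightarrow> \<sigma> (\<lambda>f. D f + E f) = (\<lambda>f. \<sigma> D f + \<sigma> E f)"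
  using \<sigma> by (auto simp: lie_aut_def)

lemma lie_aut_scale: "D \<in> Der \<Longrightarrow> \<sigma> (\<lambda>f. lconst c * D f) = (\<lambda>f. lconst c * \<sigma> D f)"
  using \<sigma> by (auto simp: lie_aut_def)

lemma lie_aut_bracket: "D \<in> Der \<Longrightarrow> E \<in> Der \<Longrightarrow> \<sigma> (lie_bracket D E) = lie_bracket (\<sigma> D) (\<sigma> E)"
  using \<sigma> by (auto simp: lie_aut_def)

lemma lie_aut_zero: "\<sigma> (\<lambda>f. 0) = (\<lambda>f. 0)"
  using lie_aut_scale[OF Der_zero_fun, of 0] by simp

lemma lie_aut_sum:
  assumes "\<And>b. b \<in> B \<Longrightarrow> Y b \<in> Der"
  shows "\<sigma> (\<lambda>f. \<Sum>b\<in>B. Y b f) = (\<lambda>f. \<Sum>b\<in>B. \<sigma> (Y b) f)"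
  using assms
proof (induction B rule: infinite_finite_induct)
  case (insert x F)
  then show ?case by (simp add: lie_aut_add Der_sum_fun)
qed (simp_all add: lie_aut_zero)

end

section \<open>Leading terms in a direction\<close>

definition zdot :: "int^'n::finite \<Rightarrow> int^'n \<Rightarrow> int" where
  "zdot a b = (\<Sum>i\<in>UNIV. a $ i * b $ i)"

definition deg_lt :: "int^'n::finite \<Rightarrow> int \<Rightarrow> ('k::comm_ring_1,'n) laurent \<Rightarrow> bool" where
  "deg_lt a d f \<longleftrightarrow> (\<forall>b\<in>lsupp f. zdot a b < d)"

definition deg_le :: "int^'n::finite \<Rightarrow> int \<Rightarrow> ('k::comm_ring_1,'n) laurent \<Rightarrow> bool" where
  "deg_le a d f \<longleftrightarrow> (\<forall>b\<in>lsupp f. zdot a b \<le> d)"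

lemma zdot_add: "zdot a (b + c) = zdot a b + zdot a c"
  by (simp add: zdot_def algebra_simps sum.distrib)

lemma zdot_zero [simp]: "zdot a 0 = 0"
  by (simp add: zdot_def)

lemma zdot_scale: "zdot a (k *s b) = k * zdot a b"
  by (simp add: zdot_def sum_distrib_left mult_ac)

lemma zdot_self_pos: assumes "a \<noteq> 0" shows "zdot a a > 0"
proof -
  obtain j where j: "a $ j \<noteq> 0" using assms by (auto simp: vec_eq_iff)
  have "a $ j * a $ j \<le> zdot a a"
    unfolding zdot_def by (rule member_le_sum) auto
  moreover have "a $ j * a $ j > 0" using j by (auto simp: zero_less_mult_iff linorder_neq_iff)
  ultimately show ?thesis by simp
qed

lemma zdot_lt_self:
  assumes "b \<noteq> a" "zdot b b \<le> zdot a a" shows "zdot a b < zdot a a"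
proof -
  have "zdot (a - b) (a - b) = (\<Sum>i\<in>UNIV. a $ i * a $ i - 2 * (a $ i * b $ i) + b $ i * b $ i)"
    unfolding zdot_def by (rule sum.cong) (simp_all add: algebra_simps)
  also have "\<dots> = zdot a a - 2 * zdot a b + zdot b b"
    by (simp add: zdot_def sum.distrib sum_subtractf sum_distrib_left)
  finally show ?thesis using zdot_self_pos[of "a - b"] assms by simp
qed

lemma deg_lt_imp_le: "deg_lt a d f \<Longrightarrow> deg_le a d f"
  by (auto simp: deg_lt_def deg_le_def less_imp_le)

lemma deg_lt_add: "deg_lt a d f \<Longrightarrow> deg_lt a d g \<Longrightarrow> deg_lt a d (f + g)"
  using keys_add[of f g] by (auto simp: deg_lt_def)

lemma deg_le_add: "deg_le a d f \<Longrightarrow> deg_le a d g \<Longrightarrow> deg_le a d (f + g)"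
  using keys_add[of f g] by (auto simp: deg_le_def)

lemma deg_lt_diff: "deg_lt a d f \<Longrightarrow> deg_lt a d g \<Longrightarrow> deg_lt a d (f - g)"
  using deg_lt_add[of a d f "- g"] by (simp add: deg_lt_def)

lemma deg_lt_zero: "deg_lt a d 0"
  by (simp add: deg_lt_def)

lemma deg_lt_sum: "(\<And>x. x \<in> S \<Longrightarrow> deg_lt a d (F x)) \<Longrightarrow> deg_lt a d (\<Sum>x\<in>S. F x)"
  by (induction S rule: infinite_finite_induct) (auto simp: deg_lt_zero deg_lt_add)

lemma deg_le_single: "deg_le a (zdot a c) (lmonom c w)"
  by (simp add: deg_le_def)

lemma deg_lt_H: "deg_lt a d f \<Longrightarrow> deg_lt a d (H j f)"
  using lsupp_H by (auto simp: deg_lt_def)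

lemma deg_le_H: "deg_le a d f \<Longrightarrow> deg_le a d (H j f)"
  using lsupp_H by (auto simp: deg_le_def)

lemma deg_lt_mult_left: "deg_lt a d1 f \<Longrightarrow> deg_le a d2 g \<Longrightarrow> deg_lt a (d1 + d2) (f * g)"
  using keys_mult[of f g] by (fastforce simp: deg_lt_def deg_le_def zdot_add)

lemma deg_lt_mult_right: "deg_le a d1 f \<Longrightarrow> deg_lt a d2 g \<Longrightarrow> deg_lt a (d1 + d2) (f * g)"
  using keys_mult[of f g] by (fastforce simp: deg_lt_def deg_le_def zdot_add)

lemma lcoeff_eq_0_if_deg_lt: "deg_lt a d f \<Longrightarrow> d \<le> zdot a b \<Longrightarrow> lcoeff f b = 0"
  unfolding deg_lt_def using not_in_keys_iff_lookup_eq_zero by fastforce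

lemma pairing_scale: "pairing \<kappa> (k *s b) = of_int k * pairing \<kappa> b"
  by (simp add: pairing_def sum_distrib_left mult_ac)

lemma bracket_coeff_leading_term:
  fixes t s g r :: "'n::finite \<Rightarrow> ('k::comm_ring_1,'n) laurent"
  assumes t: "\<And>m. t m = lmonom a (v m) + s m" and s: "\<And>m. deg_lt a (zdot a a) (s m)"
    and g: "\<And>m. g m = lmonom c (w m) + r m" and r: "\<And>m. deg_lt a (zdot a c) (r m)"
  shows "deg_lt a (zdot a a + zdot a c) (vector_field t (g m) - vector_field g (t m) -
           lmonom (a + c) (pairing v c * w m - pairing w a * v m))"
proof -
  define R1 where "R1 j = lmonom a (v j) * H j (r m) + s j * H j (g m)" for j
  define R2 where "R2 j = lmonom c (w j) * H j (s m) + r j * H j (t m)" for j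
  have g_le: "deg_le a (zdot a c) (g j)" for j
    using g r deg_le_add deg_le_single deg_lt_imp_le by metis
  have t_le: "deg_le a (zdot a a) (t j)" for j
    using t s deg_le_add deg_le_single deg_lt_imp_le by metis
  have "t j * H j (g m) = lmonom (a + c) (v j * of_int (c $ j) * w m) + R1 j" for j
    unfolding R1_def t g[of m]
    by (simp add: H_add H_single distrib_left distrib_right mult_single algebra_simps)
  then have "vector_field t (g m) = lmonom (a + c) (pairing v c * w m) + (\<Sum>j\<in>UNIV. R1 j)"
    by (simp add: vector_field_def sum.distrib sum_single pairing_def sum_distrib_right)
  moreover have "g j * H j (t m) = lmonom (a + c) (w j * of_int (a $ j) * v m) + R2 j" for j
    unfolding R2_def g t[of m]
    by (simp add: H_add H_single distrib_left distrib_right mult_single algebra_simps)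
  then have "vector_field g (t m) = lmonom (a + c) (pairing w a * v m) + (\<Sum>j\<in>UNIV. R2 j)"
    by (simp add: vector_field_def sum.distrib sum_single pairing_def sum_distrib_right)
  moreover have "deg_lt a (zdot a a + zdot a c) (R1 j)" for j
    unfolding R1_def
    by (rule deg_lt_add[OF deg_lt_mult_right[OF deg_le_single deg_lt_H[OF r]]
          deg_lt_mult_left[OF s deg_le_H[OF g_le]]])
  moreover have "deg_lt a (zdot a a + zdot a c) (R2 j)" for j
    using deg_lt_add[OF deg_lt_mult_right[OF deg_le_single deg_lt_H[OF s]]
        deg_lt_mult_left[OF r deg_le_H[OF t_le]]]
    by (simp add: R2_def add.commute)
  ultimately show ?thesis
    by (simp add: single_diff deg_lt_diff deg_lt_sum)
qed

text \<open>Bracketing with a field whose leading part is $x^a \sum_j v_j H_j$ multiplies the leading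
  coefficient of a field with leading part $x^{c + i a} \sum_j w\, v_j H_j$ by
  $\langle v, c + (i - 1) a \rangle$.\<close>

definition bracket_leading_coeff :: "('n::finite \<Rightarrow> 'k::comm_ring_1) \<Rightarrow> int^'n \<Rightarrow> int^'n \<Rightarrow> nat \<Rightarrow> 'k" where
  "bracket_leading_coeff v a c k = (\<Prod>i<k. pairing v c + (of_nat i - 1) * pairing v a)"

lemma iterated_bracket_leading_term:
  fixes t s :: "'n::finite \<Rightarrow> ('k::comm_ring_1,'n) laurent"
  assumes t: "\<And>m. t m = lmonom a (v m) + s m" and s: "\<And>m. deg_lt a (zdot a a) (s m)"
  shows "\<exists>g. ((lie_bracket (vector_field t)) ^^ k) (vector_field (\<lambda>m. lmonom c (v m))) = vector_field g \<and>
     (\<forall>m. deg_lt a (zdot a c + int k * zdot a a)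
            (g m - lmonom (c + int k *s a) (bracket_leading_coeff v a c k * v m)))"
proof (induction k)
  case 0
  show ?case by (auto simp: bracket_leading_coeff_def deg_lt_zero)
next
  case (Suc k)
  then obtain g where g: "((lie_bracket (vector_field t)) ^^ k) (vector_field (\<lambda>m. lmonom c (v m))) = vector_field g"
    and g_lt: "\<And>m. deg_lt a (zdot a c + int k * zdot a a)
                    (g m - lmonom (c + int k *s a) (bracket_leading_coeff v a c k * v m))"
    by blast
  define w where "w m = bracket_leading_coeff v a c k * v m" for m
  have "deg_lt a (zdot a a + zdot a (c + int k *s a)) (vector_field t (g m) - vector_field g (t m) -
      lmonom (a + (c + int k *s a)) (pairing v (c + int k *s a) * w m - pairing w a * v m))" for m
    by (rule bracket_coeff_leading_term[OF t s, where r="\<lambda>m. g m - lmonom (c + int k *s a) (w m)"])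
       (use g_lt in \<open>simp_all add: w_def zdot_add zdot_scale\<close>)
  moreover have "pairing v (c + int k *s a) * w m - pairing w a * v m =
      bracket_leading_coeff v a c (Suc k) * v m" for m
  proof -
    have "pairing w a = bracket_leading_coeff v a c k * pairing v a"
      by (simp add: w_def pairing_def sum_distrib_left mult_ac)
    then show ?thesis
      by (simp add: w_def pairing_add pairing_scale bracket_leading_coeff_def algebra_simps)
  qed
  moreover have "a + (c + int k *s a) = c + int (Suc k) *s a"
    by (simp add: vec_eq_iff algebra_simps)
  moreover have "zdot a a + zdot a (c + int k *s a) = zdot a c + int (Suc k) * zdot a a"
    by (simp add: zdot_add zdot_scale algebra_simps)
  moreover have "((lie_bracket (vector_field t)) ^^ Suc k) (vector_field (\<lambda>m. lmonom c (v m))) =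
      vector_field (\<lambda>m. vector_field t (g m) - vector_field g (t m))"
    by (simp add: g lie_bracket_vector_field)
  ultimately show ?case by auto
qed

definition ad_poly :: "('k::comm_ring_1,'n::finite) laurent_op \<Rightarrow> 'k poly \<Rightarrow> ('k,'n) laurent_op \<Rightarrow> ('k,'n) laurent_op" where
  "ad_poly T p D = (\<lambda>f. \<Sum>k\<le>degree p. lconst (coeff p k) * ((lie_bracket T) ^^ k) D f)"

lemma ad_poly_vector_field:
  assumes "\<And>k. ((lie_bracket T) ^^ k) D = vector_field (G k)"
  shows "ad_poly T p D = vector_field (\<lambda>m. \<Sum>k\<le>degree p. lconst (coeff p k) * G k m)"
  by (simp add: fun_eq_iff ad_poly_def assms vector_field_sum vector_field_scale)

lemma lcoeff_at_later_leading_exponent: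
  assumes lt: "deg_lt a (zdot a c + int k * zdot a a) (g - lmonom (c + int k *s a) w)"
    and a: "zdot a a > 0" and "k \<le> n"
  shows "lcoeff g (c + int n *s a) = (if k = n then w else 0)"
proof -
  have "zdot a c + int k * zdot a a \<le> zdot a (c + int n *s a)"
    using assms by (simp add: zdot_add zdot_scale mult_right_mono)
  then have rest: "lcoeff (g - lmonom (c + int k *s a) w) (c + int n *s a) = 0"
    by (rule lcoeff_eq_0_if_deg_lt[OF lt])
  show ?thesis
  proof (cases "k = n")
    case False
    then have "zdot a (c + int k *s a) \<noteq> zdot a (c + int n *s a)"
      using a by (simp add: zdot_add zdot_scale)
    then have "c + int k *s a \<noteq> c + int n *s a" by metis
    then show ?thesis using rest False by (simp add: lookup_minus lookup_single when_def)
  qed (use rest in \<open>simp add: lookup_minus\<close>)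
qed

text \<open>The $k$-th iterated bracket has leading exponent $c + k a$, and these are pairwise distinct
  because $\langle a, a \rangle > 0$; so the top coefficient of $p$ survives in $p(\mathrm{ad}\, T)$.\<close>

lemma ad_poly_ne_zero:
  fixes t s :: "'n::finite \<Rightarrow> ('k::field,'n) laurent" and p :: "'k poly"
  assumes t: "\<And>m. t m = lmonom a (v m) + s m" and s: "\<And>m. deg_lt a (zdot a a) (s m)"
    and a: "zdot a a > 0" and v: "v m0 \<noteq> 0"
    and factors: "\<And>k. pairing v c + (of_nat k - 1) * pairing v a \<noteq> 0"
    and p: "lead_coeff p = 1"
  shows "ad_poly (vector_field t) p (vector_field (\<lambda>m. lmonom c (v m))) \<noteq> (\<lambda>f. 0)"
proof
  assume zero: "ad_poly (vector_field t) p (vector_field (\<lambda>m. lmonom c (v m))) = (\<lambda>f. 0)"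
  have "\<forall>k. \<exists>g. ((lie_bracket (vector_field t)) ^^ k) (vector_field (\<lambda>m. lmonom c (v m))) =
      vector_field g \<and> (\<forall>m. deg_lt a (zdot a c + int k * zdot a a)
        (g m - lmonom (c + int k *s a) (bracket_leading_coeff v a c k * v m)))"
    using iterated_bracket_leading_term[where t=t and s=s and a=a and v=v, OF t s] by blast
  then obtain G where G: "\<And>k. ((lie_bracket (vector_field t)) ^^ k) (vector_field (\<lambda>m. lmonom c (v m))) =
        vector_field (G k)"
    and G_lt: "\<And>k m. deg_lt a (zdot a c + int k * zdot a a)
        (G k m - lmonom (c + int k *s a) (bracket_leading_coeff v a c k * v m))"
    by metis
  define n where "n = degree p"
  have "vector_field (\<lambda>m. \<Sum>k\<le>n. lconst (coeff p k) * G k m) = vector_field (\<lambda>m. 0)"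
    using zero ad_poly_vector_field[of "vector_field t", OF G] by (simp add: n_def vector_field_zero)
  then have "(\<lambda>m. \<Sum>k\<le>n. lconst (coeff p k) * G k m) = (\<lambda>m. 0)"
    by (rule vector_field_inj)
  from fun_cong[OF this, of m0]
  have "0 = lcoeff (\<Sum>k\<le>n. lconst (coeff p k) * G k m0) (c + int n *s a)"
    by simp
  also have "\<dots> = (\<Sum>k\<le>n. coeff p k * lcoeff (G k m0) (c + int n *s a))"
    by (simp add: lookup_sum lcoeff_lconst_mult)
  also have "\<dots> = (\<Sum>k\<le>n. if k = n then coeff p k * (bracket_leading_coeff v a c n * v m0) else 0)"
    by (rule sum.cong) (simp_all add: lcoeff_at_later_leading_exponent[OF G_lt a])
  also have "\<dots> = bracket_leading_coeff v a c n * v m0"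
    using p by (simp add: n_def)
  finally have "bracket_leading_coeff v a c n * v m0 = 0"
    by simp
  moreover have "bracket_leading_coeff v a c n \<noteq> 0"
    using factors by (simp add: bracket_leading_coeff_def)
  ultimately show False using v by simp
qed

lemma ad_poly_eigen_sum:
  fixes T :: "('k::comm_ring_1,'n::finite) laurent_op"
  assumes T: "T \<in> Der" and Y: "\<And>b. b \<in> B \<Longrightarrow> Y b \<in> Der"
    and eigen: "\<And>b. b \<in> B \<Longrightarrow> lie_bracket T (Y b) = (\<lambda>f. lconst (\<mu> b) * Y b f)"
    and root: "\<And>b. b \<in> B \<Longrightarrow> poly p (\<mu> b) = 0"
  shows "ad_poly T p (\<lambda>f. \<Sum>b\<in>B. Y b f) = (\<lambda>f. 0)"
proof -
  have power: "((lie_bracket T) ^^ k) (\<lambda>f. \<Sum>b\<in>B. Y b f) = (\<lambda>f. \<Sum>b\<in>B. lconst (\<mu> b ^ k) * Y b f)" for k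
  proof (induction k)
    case (Suc k)
    have "lie_bracket T (\<lambda>f. \<Sum>b\<in>B. lconst (\<mu> b ^ k) * Y b f) f =
        (\<Sum>b\<in>B. lconst (\<mu> b ^ k) * lie_bracket T (Y b) f)" for f
      by (simp add: lie_bracket_def Der_sum[OF T] Der_lconst_mult[OF T] sum_subtractf right_diff_distrib)
    then show ?case
      by (simp add: Suc.IH fun_eq_iff eigen lconst_mult mult_ac cong: sum.cong)
  qed simp
  have "ad_poly T p (\<lambda>f. \<Sum>b\<in>B. Y b f) f = (\<Sum>b\<in>B. \<Sum>k\<le>degree p. lconst (coeff p k * \<mu> b ^ k) * Y b f)" for f
    by (simp add: ad_poly_def power sum_distrib_left lconst_mult mult_ac) (rule sum.swap)
  also have "\<dots> f = (\<Sum>b\<in>B. lconst (poly p (\<mu> b)) * Y b f)" for f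
    by (simp add: poly_altdef lconst_sum sum_distrib_right)
  finally show ?thesis
    by (simp add: fun_eq_iff root)
qed

section \<open>The image of the Cartan subalgebra\<close>

lemma exists_leading_exponent:
  fixes t :: "'n::finite \<Rightarrow> ('k::comm_ring_1,'n) laurent"
  assumes b1: "b1 \<in> lsupp (t m1)" "b1 \<noteq> 0"
  obtains a v s m0 where "a \<noteq> 0" "\<And>m. t m = lmonom a (v m) + s m"
    "\<And>m. deg_lt a (zdot a a) (s m)" "v m0 \<noteq> 0"
proof -
  define K where "K = (\<Union>m. lsupp (t m)) - {0}"
  have "finite K" "b1 \<in> K"
    using b1 by (auto simp: K_def)
  then obtain a where a: "a \<in> K" and a_max: "\<And>b. b \<in> K \<Longrightarrow> zdot b b \<le> zdot a a"
    using Max_in[of "(\<lambda>b. zdot b b) ` K"] Max_ge[of "(\<lambda>b. zdot b b) ` K"] by fastforce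
  then have a0: "a \<noteq> 0" by (simp add: K_def)
  define v where "v m = lcoeff (t m) a" for m
  define s where "s m = t m - lmonom a (v m)" for m
  have s_lt: "deg_lt a (zdot a a) (s m)" for m
    unfolding deg_lt_def
  proof
    fix b assume "b \<in> lsupp (s m)"
    then have ba: "b \<noteq> a" and "lcoeff (t m) b \<noteq> 0"
      by (auto simp: s_def v_def in_keys_iff lookup_minus lookup_single when_def split: if_splits)
    then have "b = 0 \<or> b \<in> K"
      by (auto simp: K_def in_keys_iff)
    then show "zdot a b < zdot a a"
      using zdot_self_pos[OF a0] zdot_lt_self[OF ba a_max] by auto
  qed
  obtain m0 where m0: "v m0 \<noteq> 0"
    using a by (auto simp: K_def v_def in_keys_iff)
  have t_eq: "t m = lmonom a (v m) + s m" for m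
    by (simp add: s_def)
  show ?thesis
    by (rule that[OF a0 t_eq s_lt m0])
qed

lemma exists_exponent_nonvanishing_factors:
  fixes v :: "'n::finite \<Rightarrow> 'k::field_char_0"
  assumes "v m0 \<noteq> 0"
  obtains c where "\<And>k. pairing v c + (of_nat k - 1) * pairing v a \<noteq> 0"
proof (cases "pairing v a = 0")
  case True
  show ?thesis by (rule that[of "axis m0 1"]) (simp add: pairing_axis True assms)
next
  case False
  have "pairing v (a + a) + (of_nat k - 1) * pairing v a = of_nat (Suc k) * pairing v a" for k
    unfolding pairing_add by (simp add: algebra_simps)
  then show ?thesis
    using False by (intro that[of "a + a"]) (simp del: of_nat_Suc)
qed

lemma vector_field_homogeneous_decomp:
  assumes "finite B" "\<And>m. lsupp (z m) \<subseteq> B"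
  shows "vector_field z = (\<lambda>f. \<Sum>b\<in>B. vector_field (\<lambda>m. lmonom b (lcoeff (z m) b)) f)"
proof -
  have "z m = (\<Sum>b\<in>B. lmonom b (lcoeff (z m) b))" for m
    by (rule poly_mapping_eq_sum_single[OF assms])
  then have "vector_field z f = vector_field (\<lambda>m. \<Sum>b\<in>B. lmonom b (lcoeff (z m) b)) f" for f
    by presburger
  then show ?thesis
    by (simp add: vector_field_sum fun_eq_iff)
qed

context
  fixes \<sigma> :: "('k::field_char_0,'n::finite) laurent_op \<Rightarrow> ('k,'n) laurent_op"
  assumes \<sigma>: "lie_aut \<sigma>"
begin

lemma lie_aut_H_ad_annihilated:
  assumes E: "E \<in> Der"
  obtains p where "lead_coeff p = 1" "ad_poly (\<sigma> (H i)) p E = (\<lambda>f. 0)"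
proof -
  obtain Z where Z: "Z \<in> Der" "\<sigma> Z = E"
    using lie_aut_surj[OF \<sigma> E] by blast
  define z where "z m = lvar_inv m * Z (lvar m)" for m
  define B where "B = (\<Union>m. lsupp (z m))"
  define Zb where "Zb b = vector_field (\<lambda>m. lmonom b (lcoeff (z m) b))" for b
  have Zb: "Zb b \<in> Der" for b
    by (simp add: Zb_def vector_field_in_Der)
  have B: "finite B"
    by (simp add: B_def)
  have "Z = vector_field z"
    unfolding z_def by (rule Der_eq_vector_field[OF Z(1)])
  also have "\<dots> = (\<lambda>f. \<Sum>b\<in>B. Zb b f)"
    unfolding Zb_def by (rule vector_field_homogeneous_decomp[OF B]) (auto simp: B_def)
  finally have E_eq: "E = (\<lambda>f. \<Sum>b\<in>B. \<sigma> (Zb b) f)"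
    using Z(2) lie_aut_sum[OF \<sigma>, of B Zb] Zb by simp
  define p where "p = (\<Prod>b\<in>B. [:- of_int (b $ i), 1:] :: 'k poly)"
  have "ad_poly (\<sigma> (H i)) p (\<lambda>f. \<Sum>b\<in>B. \<sigma> (Zb b) f) = (\<lambda>f. 0)"
  proof (rule ad_poly_eigen_sum[OF lie_aut_Der[OF \<sigma> H_in_Der] lie_aut_Der[OF \<sigma> Zb]])
    show "lie_bracket (\<sigma> (H i)) (\<sigma> (Zb b)) = (\<lambda>f. lconst (of_int (b $ i)) * \<sigma> (Zb b) f)" for b
      using lie_aut_bracket[OF \<sigma> H_in_Der Zb] lie_aut_scale[OF \<sigma> Zb]
      by (simp add: Zb_def lie_bracket_H_single)
    show "poly p (of_int (b $ i)) = 0" if "b \<in> B" for b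
      using that B by (auto simp: p_def poly_prod intro!: prod_zero)
  qed
  moreover have "lead_coeff p = 1"
    by (simp add: p_def lead_coeff_prod)
  ultimately show ?thesis
    using that E_eq by blast
qed

lemma lie_aut_H_const_coeffs: "\<exists>\<kappa>. \<sigma> (H i) = vector_field (\<lambda>j. lconst (\<kappa> j))"
proof -
  define T where "T = \<sigma> (H i)"
  have T: "T \<in> Der" unfolding T_def by (rule lie_aut_Der[OF \<sigma> H_in_Der])
  define t where "t m = lvar_inv m * T (lvar m)" for m
  have T_eq: "T = vector_field t"
    unfolding t_def by (rule Der_eq_vector_field[OF T])
  have "lsupp (t m) \<subseteq> {0}" for m
  proof (rule ccontr)
    assume "\<not> lsupp (t m) \<subseteq> {0}"
    then obtain b1 where b1: "b1 \<in> lsupp (t m)" "b1 \<noteq> 0" by blast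
    obtain a v s m0 where a: "a \<noteq> 0" and t: "\<And>m. t m = lmonom a (v m) + s m"
      and s: "\<And>m. deg_lt a (zdot a a) (s m)" and v: "v m0 \<noteq> 0"
      using exists_leading_exponent[of b1 t m, OF b1] by blast
    obtain c where factors: "\<And>k. pairing v c + (of_nat k - 1) * pairing v a \<noteq> 0"
      using exists_exponent_nonvanishing_factors[of v m0 a, OF v] by blast
    obtain p where "lead_coeff p = 1"
      "ad_poly T p (vector_field (\<lambda>m. lmonom c (v m))) = (\<lambda>f. 0)"
      using lie_aut_H_ad_annihilated[OF vector_field_in_Der] unfolding T_def by blast
    then show False
      using ad_poly_ne_zero[where t=t and s=s, OF t s zdot_self_pos[OF a] v factors] T_eq by simp
  qed
  then have "t m = lconst (lcoeff (t m) 0)" for m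
    using poly_mapping_eq_sum_single[of "{0}" "t m"] by (simp add: lconst_def)
  then have "\<sigma> (H i) = vector_field (\<lambda>j. lconst (lcoeff (t j) 0))"
    using T_eq T_def by presburger
  then show ?thesis by (rule exI[of _ "\<lambda>j. lcoeff (t j) 0"])
qed

lemma lie_aut_H_pairing_integral:
  assumes \<kappa>: "\<And>i. \<sigma> (H i) = vector_field (\<lambda>j. lconst (\<kappa> i j))"
  shows "\<exists>b. \<forall>i. pairing (\<kappa> i) c = of_int (b $ i)"
proof -
  define Y :: "('k,'n) laurent_op" where "Y = vector_field (\<lambda>m. lmonom c 1)"
  have Y: "Y \<in> Der" "Y \<noteq> (\<lambda>f. 0)"
    by (simp_all add: Y_def vector_field_in_Der vector_field_ne_zero single_one_ne_zero)
  obtain X where X: "X \<in> Der" "\<sigma> X = Y"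
    using lie_aut_surj[OF \<sigma> Y(1)] by blast
  define x where "x m = lvar_inv m * X (lvar m)" for m
  have X_eq: "X = vector_field x"
    unfolding x_def by (rule Der_eq_vector_field[OF X(1)])
  have "lie_bracket (H i) X = (\<lambda>f. lconst (pairing (\<kappa> i) c) * X f)" for i
  proof (rule lie_aut_inj[OF \<sigma> lie_bracket_in_Der[OF H_in_Der X(1)] Der_scale_fun[OF X(1)]])
    have "\<sigma> (lie_bracket (H i) X) = lie_bracket (\<sigma> (H i)) Y"
      using lie_aut_bracket[OF \<sigma> H_in_Der X(1)] X(2) by simp
    also have "\<dots> = (\<lambda>f. lconst (pairing (\<kappa> i) c) * Y f)"
      unfolding \<kappa> Y_def by (rule lie_bracket_const_field_single)
    finally show "\<sigma> (lie_bracket (H i) X) = \<sigma> (\<lambda>f. lconst (pairing (\<kappa> i) c) * X f)"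
      using lie_aut_scale[OF \<sigma> X(1)] X(2) by simp
  qed
  then have "lie_bracket (vector_field (\<lambda>j. lconst (if j = i then 1 else 0))) (vector_field x) =
      (\<lambda>f. lconst (pairing (\<kappa> i) c) * vector_field x f)" for i
    unfolding X_eq H_eq_const_field .
  moreover have "vector_field x \<noteq> (\<lambda>f. 0)"
    using X(2) Y(2) lie_aut_zero[OF \<sigma>] X_eq by auto
  ultimately obtain b where "\<forall>i. pairing (\<kappa> i) c = pairing (\<lambda>j. if j = i then 1 else 0) b"
    using common_eigenvalues_pairing[of x "\<lambda>i j. if j = i then 1 else 0" "\<lambda>i. pairing (\<kappa> i) c"]
    by blast
  then show ?thesis
    by (auto simp: pairing_delta)
qed

lemma lie_aut_H_pairing_surj:
  assumes \<kappa>: "\<And>i. \<sigma> (H i) = vector_field (\<lambda>j. lconst (\<kappa> i j))"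
  shows "\<exists>c. \<forall>i. pairing (\<kappa> i) c = of_int (b $ i)"
proof -
  define Z :: "('k,'n) laurent_op" where "Z = vector_field (\<lambda>m. lmonom b 1)"
  have Z: "Z \<in> Der" "Z \<noteq> (\<lambda>f. 0)"
    by (simp_all add: Z_def vector_field_in_Der vector_field_ne_zero single_one_ne_zero)
  define Y where "Y = \<sigma> Z"
  have Y: "Y \<in> Der"
    unfolding Y_def by (rule lie_aut_Der[OF \<sigma> Z(1)])
  have "lie_bracket (vector_field (\<lambda>j. lconst (\<kappa> i j))) Y = (\<lambda>f. lconst (of_int (b $ i)) * Y f)" for i
  proof -
    have "lie_bracket (vector_field (\<lambda>j. lconst (\<kappa> i j))) Y = \<sigma> (lie_bracket (H i) Z)"
      unfolding Y_def \<kappa>[symmetric] by (rule lie_aut_bracket[OF \<sigma> H_in_Der Z(1), symmetric])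
    also have "\<dots> = \<sigma> (\<lambda>f. lconst (of_int (b $ i)) * Z f)"
      unfolding Z_def lie_bracket_H_single ..
    finally show ?thesis
      unfolding Y_def by (simp add: lie_aut_scale[OF \<sigma> Z(1)])
  qed
  moreover have "Y = vector_field (\<lambda>m. lvar_inv m * Y (lvar m))"
    by (rule Der_eq_vector_field[OF Y])
  moreover have "Y \<noteq> (\<lambda>f. 0)"
    using lie_aut_inj[OF \<sigma> Z(1) Der_zero_fun] lie_aut_zero[OF \<sigma>] Z(2) by (auto simp: Y_def)
  ultimately obtain c where "\<forall>i. of_int (b $ i) = pairing (\<kappa> i) c"
    using common_eigenvalues_pairing[of "\<lambda>m. lvar_inv m * Y (lvar m)" \<kappa> "\<lambda>i. of_int (b $ i)"]
    by auto
  then show ?thesis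
    by auto
qed

lemma lie_aut_H_int_matrix:
  obtains A :: "int^'n^'n"
  where "\<And>i. \<sigma> (H i) = vector_field (\<lambda>j. of_int (A $ i $ j))" "surj ((*v) A)"
proof -
  have "\<forall>i. \<exists>\<kappa>. \<sigma> (H i) = vector_field (\<lambda>j. lconst (\<kappa> j))"
    using lie_aut_H_const_coeffs by blast
  then obtain \<kappa> where \<kappa>: "\<And>i. \<sigma> (H i) = vector_field (\<lambda>j. lconst (\<kappa> i j))"
    by metis
  have "\<forall>j. \<exists>b. \<forall>i. pairing (\<kappa> i) (axis j 1) = of_int (b $ i)"
    using lie_aut_H_pairing_integral[OF \<kappa>] by blast
  then obtain col where col: "\<And>j i. pairing (\<kappa> i) (axis j 1) = of_int (col j $ i)"
    by metis
  define A :: "int^'n^'n" where "A = (\<chi> i j. col j $ i)"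
  have \<kappa>_A: "\<kappa> i j = of_int (A $ i $ j)" for i j
    using col[of i j] by (simp add: A_def pairing_axis)
  have "b \<in> range ((*v) A)" for b
  proof -
    obtain c where c: "\<And>i. pairing (\<kappa> i) c = of_int (b $ i)"
      using lie_aut_H_pairing_surj[OF \<kappa>] by blast
    have "pairing (\<kappa> i) c = of_int ((A *v c) $ i)" for i
      by (simp add: pairing_def matrix_vector_mult_def \<kappa>_A)
    then have "A *v c = b"
      using c by (simp add: vec_eq_iff)
    then show ?thesis by blast
  qed
  then have "surj ((*v) A)" by blast
  moreover have "\<sigma> (H i) = vector_field (\<lambda>j. of_int (A $ i $ j))" for i
    by (simp add: \<kappa> \<kappa>_A of_int_eq_lconst)
  ultimately show ?thesis using that by blast
qed

end

lemma int_matrix_surj_inverse: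
  fixes A :: "int^'n::finite^'n"
  assumes "surj ((*v) A)"
  obtains C where "A ** C = mat 1" "C ** A = mat 1"
proof -
  have "\<forall>k. \<exists>c. A *v c = axis k 1"
    using assms by (metis surj_def)
  then obtain col where col: "\<And>k. A *v col k = axis k 1"
    by metis
  define C :: "int^'n^'n" where "C = (\<chi> i k. col k $ i)"
  have AC: "A ** C = mat 1"
  proof -
    have "(A ** C) $ i $ k = (A *v col k) $ i" for i k
      by (simp add: matrix_matrix_mult_def matrix_vector_mult_def C_def)
    then show ?thesis by (simp add: vec_eq_iff col axis_def mat_def)
  qed
  text \<open>Over \<open>\<real>\<close> a one-sided inverse is two-sided.\<close>
  define R :: "int^'n^'n \<Rightarrow> real^'n^'n" where "R X = (\<chi> i j. real_of_int (X $ i $ j))" for X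
  have R_mult: "R (X ** Y) = R X ** R Y" for X Y
    by (simp add: R_def vec_eq_iff matrix_matrix_mult_def)
  have R_one: "R (mat 1) = mat 1"
    by (simp add: R_def vec_eq_iff mat_def)
  have R_inj: "R X = R Y \<Longrightarrow> X = Y" for X Y
    by (simp add: R_def vec_eq_iff)
  have "R C ** R A = mat 1"
    using AC matrix_left_right_inverse by (metis R_mult R_one)
  then have "C ** A = mat 1"
    by (intro R_inj) (simp add: R_mult R_one)
  with AC show ?thesis using that by blast
qed

section \<open>The automorphisms \<open>\<sigma>\<^sub>A\<close>\<close>

text \<open>The coefficient of $x^b$ in \<open>exp_pullback C f\<close> is that of $x^{C b}$ in \<open>f\<close>; for
  $C = A^{-1}$ this is the substitution $x^b \mapsto x^{A b}$.\<close>

definition exp_pullback :: "int^'n^'n \<Rightarrow> ('k::comm_ring_1,'n::finite) laurent \<Rightarrow> ('k,'n) laurent" where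
  "exp_pullback C f = Poly_Mapping.map_key ((*v) C) f"

context
  fixes A C :: "int^'n::finite^'n"
  assumes AC: "A ** C = mat 1" and CA: "C ** A = mat 1"
begin

lemma inj_matrix_vector_mult_inverse: "inj ((*v) C)"
  by (rule injI) (metis matrix_vector_mul_assoc AC matrix_vector_mul_lid)

lemma exp_pullback_single: "exp_pullback C (lmonom b c) = lmonom (A *v b) c"
proof -
  have "lmonom b c = lmonom (C *v (A *v b)) c"
    by (simp add: matrix_vector_mul_assoc CA)
  then show ?thesis
    unfolding exp_pullback_def using map_key_single[OF inj_matrix_vector_mult_inverse] by metis
qed

lemma exp_pullback_add: "exp_pullback C (f + g) = exp_pullback C f + exp_pullback C g"
  unfolding exp_pullback_def by (rule map_key_plus[OF inj_matrix_vector_mult_inverse])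

lemma exp_pullback_mult: "exp_pullback C (f * g) = exp_pullback C f * exp_pullback C g"
proof (induction f rule: poly_mapping_induct)
  case (single b c)
  show ?case
    by (induction g rule: poly_mapping_induct)
       (simp_all add: mult_single exp_pullback_single exp_pullback_add matrix_vector_right_distrib
         distrib_left)
qed (simp add: distrib_right exp_pullback_add)

lemma exp_pullback_intertwines_H:
  "exp_pullback C (vector_field (\<lambda>j. of_int (A $ i $ j)) f) = H i (exp_pullback C f)"
proof (induction f rule: poly_mapping_induct)
  case (single b c)
  have "vector_field (\<lambda>j. of_int (A $ i $ j)) (lmonom b c) = lmonom b (of_int ((A *v b) $ i) * c)"
    by (simp add: of_int_eq_lconst const_field_single lconst_mult_single pairing_def
        matrix_vector_mult_def)
  then show ?case
    by (simp add: exp_pullback_single H_single)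
next
  case (add f g)
  then show ?case
    by (simp add: Der_add[OF vector_field_in_Der] exp_pullback_add H_add)
qed

end

lemma is_sigmaA_exp_pullback:
  fixes A C :: "int^'n::finite^'n"
  assumes AC: "A ** C = mat 1" and CA: "C ** A = mat 1"
  shows "is_sigmaA A (exp_pullback C :: ('k::comm_ring_1,'n) laurent \<Rightarrow> _)"
  unfolding is_sigmaA_def kalg_aut_def
proof (intro conjI allI)
  have "exp_pullback A (exp_pullback C f) = f" "exp_pullback C (exp_pullback A f) = f"
    for f :: "('k,'n) laurent"
    by (induction f rule: poly_mapping_induct)
       (simp_all add: exp_pullback_single[OF AC CA] exp_pullback_add[OF AC CA]
         exp_pullback_single[OF CA AC] exp_pullback_add[OF CA AC] matrix_vector_mul_assoc AC CA)
  then show "bij (exp_pullback C :: ('k,'n) laurent \<Rightarrow> _)"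
    by (intro o_bij[of "exp_pullback A"]) (simp_all add: fun_eq_iff)
  show "exp_pullback C (lconst c * f) = lconst c * exp_pullback C f" for c and f :: "('k,'n) laurent"
    by (simp add: exp_pullback_mult[OF AC CA] lconst_def exp_pullback_single[OF AC CA])
  show "exp_pullback C (lvar i) = (\<Prod>j\<in>UNIV. lvar_pow j (A $ j $ i) :: ('k,'n) laurent)" for i
  proof -
    have "(A *v axis i 1) $ j = A $ j $ i" for j
      by (simp add: matrix_vector_mult_def axis_def if_distrib cong: if_cong)
    then show ?thesis
      by (simp add: lvar_def exp_pullback_single[OF AC CA] single_eq_prod_lvar_pow[of "A *v axis i 1"])
  qed
qed (simp_all add: exp_pullback_add[OF AC CA] exp_pullback_mult[OF AC CA]
    exp_pullback_single[OF AC CA, of 0 1, simplified])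

lemma kalg_aut_eqI:
  assumes \<phi>: "kalg_aut \<phi>" and \<psi>: "kalg_aut \<psi>" and lvar: "\<And>j. \<phi> (lvar j) = \<psi> (lvar j)"
  shows "\<phi> = \<psi>"
proof
  have hom: "h (f + g) = h f + h g" "h (f * g) = h f * h g" "h 1 = 1"
    "h (lconst c * f) = lconst c * h f" if "kalg_aut h" for h f g c
    using that unfolding kalg_aut_def by blast+
  fix f show "\<phi> f = \<psi> f"
  proof (induction f rule: laurent_induct)
    case (lconst c)
    show ?case using hom(4)[OF \<phi>, of c 1] hom(4)[OF \<psi>, of c 1] by (simp add: hom(3) \<phi> \<psi>)
  next
    case (lvar_inv j)
    have \<phi>_inv: "\<phi> (lvar j) * \<phi> (lvar_inv j) = 1" and \<psi>_inv: "\<psi> (lvar j) * \<psi> (lvar_inv j) = 1"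
      using hom(2,3)[OF \<phi>] hom(2,3)[OF \<psi>] by (metis lvar_mult_lvar_inv)+
    have "\<phi> (lvar_inv j) = \<phi> (lvar_inv j) * (\<phi> (lvar j) * \<psi> (lvar_inv j))"
      using \<psi>_inv lvar by simp
    also have "\<dots> = \<psi> (lvar_inv j)"
      using \<phi>_inv by (simp add: mult.assoc[symmetric] mult.commute[of "\<phi> (lvar_inv j)"])
    finally show ?case .
  qed (simp_all add: lvar hom \<phi> \<psi>)
qed

lemma is_sigmaA_unique: "is_sigmaA A \<phi> \<Longrightarrow> is_sigmaA A \<psi> \<Longrightarrow> \<phi> = \<psi>"
  unfolding is_sigmaA_def by (auto intro: kalg_aut_eqI)

lemma conj_act_eqI:
  assumes "bij \<phi>" "\<And>f. \<phi> (T f) = D (\<phi> f)"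
  shows "conj_act \<phi> T = D"
  using assms by (simp add: conj_act_def fun_eq_iff bij_is_surj surj_f_inv_f)

lemma is_sigmaA_conj_act:
  assumes AC: "A ** C = mat 1" and CA: "C ** A = mat 1" and \<phi>: "is_sigmaA A \<phi>"
  shows "conj_act \<phi> (vector_field (\<lambda>j. of_int (A $ i $ j))) = H i"
proof -
  have "\<phi> = exp_pullback C"
    using is_sigmaA_unique[OF \<phi> is_sigmaA_exp_pullback[OF AC CA]] .
  moreover have "bij \<phi>"
    using \<phi> by (simp add: is_sigmaA_def kalg_aut_def)
  ultimately show ?thesis
    by (simp add: conj_act_eqI exp_pullback_intertwines_H[OF AC CA])
qed

theorem lemma2p10:
  fixes \<sigma> :: "(('k::field_char_0,'n::finite) laurent \<Rightarrow> ('k,'n) laurent) \<Rightarrow> (('k,'n) laurent \<Rightarrow> ('k,'n) laurent)"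
  assumes "lie_aut \<sigma>"
  shows "\<exists>A :: int^'n^'n. invertible A
           \<and> (\<forall>i. \<sigma> (H i) = (\<lambda>f. \<Sum>j\<in>UNIV. of_int (A $ i $ j) * H j f))
           \<and> (\<exists>\<phi> :: (('k,'n) laurent \<Rightarrow> ('k,'n) laurent). is_sigmaA A \<phi>)
           \<and> (\<forall>\<phi>. is_sigmaA A \<phi> \<longrightarrow> (\<forall>i. conj_act \<phi> (\<sigma> (H i)) = H i))"
proof -
  obtain A where \<sigma>_H: "\<And>i. \<sigma> (H i) = vector_field (\<lambda>j. of_int (A $ i $ j))"
    and A: "surj ((*v) A)"
    using lie_aut_H_int_matrix[OF assms] by blast
  obtain C where AC: "A ** C = mat 1" and CA: "C ** A = mat 1"
    using int_matrix_surj_inverse[OF A] by blast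
  show ?thesis
  proof (intro exI[of _ A] conjI allI impI)
    show "invertible A"
      using AC CA invertible_def by blast
    show "\<sigma> (H i) = (\<lambda>f. \<Sum>j\<in>UNIV. of_int (A $ i $ j) * H j f)" for i
      by (simp add: \<sigma>_H vector_field_def fun_eq_iff)
    show "\<exists>\<phi> :: ('k,'n) laurent \<Rightarrow> _. is_sigmaA A \<phi>"
      using is_sigmaA_exp_pullback[OF AC CA] by blast
    show "conj_act \<phi> (\<sigma> (H i)) = H i" if "is_sigmaA A \<phi>" for \<phi> i
      unfolding \<sigma>_H by (rule is_sigmaA_conj_act[OF AC CA that])
  qed
qed

end
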